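(* Let $d,N\ge 1$ be integers, let $\mathbb{K},\mathbb{M}$ be real skew-symmetric $d\times d$ matrices, let $S:\mathbb{R}^d\to\mathbb{R}$ be smooth, and let $\mathcal{D}_h$ be a real $N\times N$ matrix (no skew-symmetry is assumed). Put $\mathcal{C}_h=\mathcal{D}_h\otimes \mathbb{I}_d$. Let $z_h(t)=(z_{h,0}(t),\dots,z_{h,N-1}(t))\in\mathbb{R}^{dN}$, $z_{h,j}(t)\in\mathbb{R}^d$, be a differentiable solution of the semi-discrete system $$\mathbb{K}\,\frac{d z_{h,j}}{dt}(t)+\mathbb{M}\,\big(\mathcal{C}_h z_h(t)\big)_j=\nabla S\big(z_{h,j}(t)\big),\qquad j=0,\dots,N-1.$$ For $j=0,\dots,N-1$ define $$\mathfrak{E}_j=S(z_{h,j})-\tfrac12\, z_{h,j}^{\top}\mathbb{M}\,(\mathcal{C}_h z_h)_j,\qquad \mathfrak{F}_j=\tfrac12\, z_{h,j}^{\top}\mathbb{M}\,\frac{dz_{h,j}}{dt},$$ $$\mathfrak{I}_j=\tfrac12\, z_{h,j}^{\top}\mathbb{K}\,(\mathcal{C}_h z_h)_j,\qquad \mathfrak{M}_j=S(z_{h,j})-\tfrac12\, z_{h,j}^{\top}\mathbb{K}\,\frac{dz_{h,j}}{dt}.$$ Then, for every $j$, $$\frac{d\mathfrak{E}_j}{dt}+\nabla_h\mathfrak{F}_j=0,\qquad \frac{d\mathfrak{I}_j}{dt}+\nabla_h\mathfrak{M}_j=0,$$ where $\nabla_h$ is the discrete spatial derivative described in the context.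
   Context: For $z=(z_0,\dots,z_{N-1})\in\mathbb{R}^{dN}$ with $z_j\in\mathbb{R}^d$, $(\mathcal{C}_h z)_j=\sum_{k=0}^{N-1}(\mathcal{D}_h)_{jk}z_k$ ($\mathcal{D}_h$ is a grid operator approximating $\partial_x$ under periodic boundary conditions). The discrete gradient $\nabla_h$ is defined, for a smooth function $Q$ of the state at node $j$, by $\nabla_h Q(z_j)=\nabla Q(z_j)^{\top}(\mathcal{C}_h z)_j$, i.e. the chain rule with the derivative $\partial_x$ of the state replaced by $\mathcal{C}_h z$; for quantities that also involve the time derivative $\dot z=dz_h/dt$, every occurrence of the state (including in $\dot z$) is differentiated this way, so that explicitly $\nabla_h\mathfrak{F}_j=\tfrac12(\mathcal{C}_h z_h)_j^{\top}\mathbb{M}\,\dot z_{h,j}+\tfrac12 z_{h,j}^{\top}\mathbb{M}\,(\mathcal{C}_h\dot z_h)_j$ and $\nabla_h\mathfrak{M}_j=\nabla S(z_{h,j})^{\top}(\mathcal{C}_h z_h)_j-\tfrac12(\mathcal{C}_h z_h)_j^{\top}\mathbb{K}\,\dot z_{h,j}-\tfrac12 z_{h,j}^{\top}\mathbb{K}\,(\mathcal{C}_h \dot z_h)_j$. *)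

theory Defs
  imports "HOL-Analysis.Analysis"
begin

text \<open>States: z = (z_0,...,z_{N-1}) with z_j in R^d is modelled as an element of
  (real^'d)^'n, where the finite types 'd and 'n have cardinalities d and N.\<close>

text \<open>C_h = D_h (Kronecker) I_d acting blockwise: (C_h z)_j = sum_k (D_h)_{jk} z_k.\<close>
definition Ch :: "real^'n^'n \<Rightarrow> (real^'d)^'n \<Rightarrow> (real^'d)^'n" where
  "Ch D z = (\<chi> j. \<Sum>k\<in>UNIV. (D$j$k) *\<^sub>R (z$k))"

definition skew_symmetric :: "real^'d^'d \<Rightarrow> bool" where
  "skew_symmetric A \<longleftrightarrow> transpose A = - A"

text \<open>Local densities; zd stands for the time derivative dz_h/dt.\<close>
definition frakE :: "(real^'d \<Rightarrow> real) \<Rightarrow> real^'d^'d \<Rightarrow> real^'n^'n \<Rightarrow> (real^'d)^'n \<Rightarrow> 'n \<Rightarrow> real" where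
  "frakE S M D z j = S (z$j) - 1/2 * ((z$j) \<bullet> (M *v (Ch D z $ j)))"

definition frakF :: "real^'d^'d \<Rightarrow> (real^'d)^'n \<Rightarrow> (real^'d)^'n \<Rightarrow> 'n \<Rightarrow> real" where
  "frakF M z zd j = 1/2 * ((z$j) \<bullet> (M *v (zd$j)))"

definition frakI :: "real^'d^'d \<Rightarrow> real^'n^'n \<Rightarrow> (real^'d)^'n \<Rightarrow> 'n \<Rightarrow> real" where
  "frakI K D z j = 1/2 * ((z$j) \<bullet> (K *v (Ch D z $ j)))"

definition frakM :: "(real^'d \<Rightarrow> real) \<Rightarrow> real^'d^'d \<Rightarrow> (real^'d)^'n \<Rightarrow> (real^'d)^'n \<Rightarrow> 'n \<Rightarrow> real" where
  "frakM S K z zd j = S (z$j) - 1/2 * ((z$j) \<bullet> (K *v (zd$j)))"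

definition gradh_F :: "real^'d^'d \<Rightarrow> real^'n^'n \<Rightarrow> (real^'d)^'n \<Rightarrow> (real^'d)^'n \<Rightarrow> 'n \<Rightarrow> real" where
  "gradh_F M D z zd j = 1/2 * ((Ch D z $ j) \<bullet> (M *v (zd$j))) + 1/2 * ((z$j) \<bullet> (M *v (Ch D zd $ j)))"

definition gradh_M :: "(real^'d \<Rightarrow> real^'d) \<Rightarrow> real^'d^'d \<Rightarrow> real^'n^'n \<Rightarrow> (real^'d)^'n \<Rightarrow> (real^'d)^'n \<Rightarrow> 'n \<Rightarrow> real" where
  "gradh_M gradS K D z zd j = (gradS (z$j)) \<bullet> (Ch D z $ j)
     - 1/2 * ((Ch D z $ j) \<bullet> (K *v (zd$j))) - 1/2 * ((z$j) \<bullet> (K *v (Ch D zd $ j)))"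

end

theory Submission
  imports Defs
begin

text \<open>Both laws are pointwise in time and rest on skew-symmetry alone: for skew A one has
  x \<bullet> A x = 0 and x \<bullet> A y = - (y \<bullet> A x). Differentiating E_j gives
  \<nabla>S(z_j) \<bullet> z_j' minus the product-rule term of the bilinear part; pairing the ODE with z_j'
  kills the K-term and turns \<nabla>S(z_j) \<bullet> z_j' into z_j' \<bullet> M (C z)_j, after which antisymmetry
  of M matches everything with \<nabla>_h F_j. For I_j one pairs the ODE with (C z)_j instead, which
  kills the M-term. No property of D_h is needed, since C_h only enters linearly.\<close>

lemma skew_symmetric_inner_antisym:
  fixes A :: "real^'d^'d"
  assumes "skew_symmetric A"
  shows "x \<bullet> (A *v y) = - (y \<bullet> (A *v x))"
proof -
  have "x \<bullet> (A *v y) = (transpose A *v x) \<bullet> y"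
    by (simp add: dot_lmul_matrix transpose_matrix_vector)
  also have "transpose A = - A"
    using assms by (simp add: skew_symmetric_def)
  finally show ?thesis
    by (simp add: inner_commute matrix_vector_mult_def inner_vec_def sum_negf)
qed

lemma skew_symmetric_inner_self:
  fixes A :: "real^'d^'d"
  assumes "skew_symmetric A"
  shows "x \<bullet> (A *v x) = 0"
  using skew_symmetric_inner_antisym[OF assms, of x x] by simp

lemma has_vector_derivative_Ch_nth:
  assumes "(z has_vector_derivative zd) F"
  shows "((\<lambda>s. Ch D (z s) $ j) has_vector_derivative Ch D zd $ j) F"
  unfolding Ch_def vec_lambda_beta
  by (intro has_vector_derivative_sum assms
      bounded_linear.has_vector_derivative[OF bounded_linear_scaleR_right]
      bounded_linear.has_vector_derivative[OF bounded_linear_vec_nth])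

lemma has_vector_derivative_nth_inner_Ch:
  fixes A :: "real^'d^'d" and z :: "real \<Rightarrow> (real^'d)^'n"
  assumes z: "(z has_vector_derivative zd) (at t within T)"
  shows "((\<lambda>s. (z s $ j) \<bullet> (A *v (Ch D (z s) $ j))) has_vector_derivative
           (z t $ j) \<bullet> (A *v (Ch D zd $ j)) + (zd $ j) \<bullet> (A *v (Ch D (z t) $ j)))
         (at t within T)"
proof -
  have "((\<lambda>s. z s $ j) has_vector_derivative zd $ j) (at t within T)"
    by (rule bounded_linear.has_vector_derivative[OF bounded_linear_vec_nth z])
  moreover have "((\<lambda>s. A *v (Ch D (z s) $ j)) has_vector_derivative A *v (Ch D zd $ j))
      (at t within T)"
    by (rule bounded_linear.has_vector_derivative[OF matrix_vector_mul_bounded_linear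
          has_vector_derivative_Ch_nth[OF z]])
  ultimately show ?thesis
    using bounded_bilinear.has_vector_derivative[OF bounded_bilinear_inner] by blast
qed

lemma has_real_derivative_frakE:
  fixes z :: "real \<Rightarrow> (real^'d)^'n"
  assumes S: "(S has_derivative (\<lambda>v. gradS (z t $ j) \<bullet> v)) (at (z t $ j))"
    and z: "(z has_vector_derivative zd) (at t within T)"
  shows "((\<lambda>s. frakE S M D (z s) j) has_real_derivative
           gradS (z t $ j) \<bullet> (zd $ j)
           - 1/2 * ((z t $ j) \<bullet> (M *v (Ch D zd $ j)) + (zd $ j) \<bullet> (M *v (Ch D (z t) $ j))))
         (at t within T)"
proof -
  have "((\<lambda>s. z s $ j) has_vector_derivative zd $ j) (at t within T)"
    by (rule bounded_linear.has_vector_derivative[OF bounded_linear_vec_nth z])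
  then have "((\<lambda>s. S (z s $ j)) has_vector_derivative gradS (z t $ j) \<bullet> (zd $ j))
      (at t within T)"
    using vector_derivative_diff_chain_within has_derivative_at_withinI[OF S]
    by (fastforce simp: o_def)
  then show ?thesis
    unfolding frakE_def has_real_derivative_iff_has_vector_derivative
    by (intro has_vector_derivative_diff has_vector_derivative_mult_right
        has_vector_derivative_nth_inner_Ch z)
qed

lemma has_real_derivative_frakI:
  fixes z :: "real \<Rightarrow> (real^'d)^'n"
  assumes "(z has_vector_derivative zd) (at t within T)"
  shows "((\<lambda>s. frakI K D (z s) j) has_real_derivative
           1/2 * ((z t $ j) \<bullet> (K *v (Ch D zd $ j)) + (zd $ j) \<bullet> (K *v (Ch D (z t) $ j))))
         (at t within T)"
  unfolding frakI_def has_real_derivative_iff_has_vector_derivative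
  by (intro has_vector_derivative_mult_right has_vector_derivative_nth_inner_Ch assms)

lemma energy_flux_balance:
  fixes z zd :: "(real^'d)^'n"
  assumes skK: "skew_symmetric K" and skM: "skew_symmetric M"
    and ode: "K *v (zd $ j) + M *v (Ch D z $ j) = gradS (z $ j)"
  shows "gradS (z $ j) \<bullet> (zd $ j)
           - 1/2 * ((z $ j) \<bullet> (M *v (Ch D zd $ j)) + (zd $ j) \<bullet> (M *v (Ch D z $ j)))
         + gradh_F M D z zd j = 0"
proof -
  have "gradS (z $ j) \<bullet> (zd $ j) = (zd $ j) \<bullet> (M *v (Ch D z $ j))"
    using skew_symmetric_inner_self[OF skK, of "zd $ j"] ode[symmetric]
    by (simp add: inner_commute inner_add_right)
  moreover have "(Ch D z $ j) \<bullet> (M *v (zd $ j)) = - ((zd $ j) \<bullet> (M *v (Ch D z $ j)))"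
    by (rule skew_symmetric_inner_antisym[OF skM])
  ultimately show ?thesis
    unfolding gradh_F_def by (simp add: algebra_simps)
qed

lemma momentum_flux_balance:
  fixes z zd :: "(real^'d)^'n"
  assumes skK: "skew_symmetric K" and skM: "skew_symmetric M"
    and ode: "K *v (zd $ j) + M *v (Ch D z $ j) = gradS (z $ j)"
  shows "1/2 * ((z $ j) \<bullet> (K *v (Ch D zd $ j)) + (zd $ j) \<bullet> (K *v (Ch D z $ j)))
         + gradh_M gradS K D z zd j = 0"
proof -
  have "gradS (z $ j) \<bullet> (Ch D z $ j) = (Ch D z $ j) \<bullet> (K *v (zd $ j))"
    using skew_symmetric_inner_self[OF skM, of "Ch D z $ j"] ode[symmetric]
    by (simp add: inner_commute inner_add_right)
  moreover have "(Ch D z $ j) \<bullet> (K *v (zd $ j)) = - ((zd $ j) \<bullet> (K *v (Ch D z $ j)))"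
    by (rule skew_symmetric_inner_antisym[OF skK])
  ultimately show ?thesis
    unfolding gradh_M_def by (simp add: algebra_simps)
qed

theorem theorem1:
  fixes K M :: "real^'d^'d"
    and D :: "real^'n^'n"
    and S :: "real^'d \<Rightarrow> real"
    and gradS :: "real^'d \<Rightarrow> real^'d"
    and z zdot :: "real \<Rightarrow> (real^'d)^'n"
    and T :: "real set"
  assumes skK: "skew_symmetric K"
    and skM: "skew_symmetric M"
    and S_grad: "\<And>x. (S has_derivative (\<lambda>v. gradS x \<bullet> v)) (at x)"
    and T_int: "is_interval T"
    and z_deriv: "\<And>t. t \<in> T \<Longrightarrow> (z has_vector_derivative zdot t) (at t within T)"
    and ode: "\<And>t j. t \<in> T \<Longrightarrow>
               K *v (zdot t $ j) + M *v (Ch D (z t) $ j) = gradS (z t $ j)"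
  shows "\<forall>t\<in>T. \<forall>j.
           (\<exists>e. ((\<lambda>s. frakE S M D (z s) j) has_real_derivative e) (at t within T)
                \<and> e + gradh_F M D (z t) (zdot t) j = 0)
         \<and> (\<exists>i. ((\<lambda>s. frakI K D (z s) j) has_real_derivative i) (at t within T)
                \<and> i + gradh_M gradS K D (z t) (zdot t) j = 0)"
proof (intro ballI allI conjI)
  fix t j assume t: "t \<in> T"
  show "\<exists>e. ((\<lambda>s. frakE S M D (z s) j) has_real_derivative e) (at t within T)
            \<and> e + gradh_F M D (z t) (zdot t) j = 0"
    using has_real_derivative_frakE[where gradS = gradS, OF S_grad z_deriv[OF t]]
      energy_flux_balance[where gradS = gradS, OF skK skM ode[OF t]] by blast
  show "\<exists>i. ((\<lambda>s. frakI K D (z s) j) has_real_derivative i) (at t within T)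
            \<and> i + gradh_M gradS K D (z t) (zdot t) j = 0"
    using has_real_derivative_frakI[OF z_deriv[OF t]]
      momentum_flux_balance[where gradS = gradS, OF skK skM ode[OF t]] by blast
qed

end
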